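(* Let $\mathcal{A}^{(+)!}$ be the unital associative $\mathbb{C}$-algebra generated by $\theta^0,\theta^1,\theta^2,\theta^3$ (each of degree $1$) with relations $\theta^\mu\theta^\nu+\theta^\nu\theta^\mu=0$ for all $\mu,\nu\in\{0,1,2,3\}$ and $[\theta^0,\theta^k]+[\theta^\ell,\theta^m]=0$ for every cyclic permutation $(k,\ell,m)$ of $(1,2,3)$. Then $\mathcal{A}^{(+)!}_0=\mathbb{C}1$, $\mathcal{A}^{(+)!}_1=\bigoplus_{\lambda=0}^3\mathbb{C}\theta^\lambda$, $\mathcal{A}^{(+)!}_2=\bigoplus_{k=1}^3\mathbb{C}\theta^0\theta^k$, and $\mathcal{A}^{(+)!}_n=0$ for $n\ge3$.
   Context: $\mathcal{A}^{(+)!}$ is the quadratic dual of the self-duality algebra $\mathcal{A}^{(+)}$ generated by $\nabla_0,\dots,\nabla_3$ with relations $[\nabla_0,\nabla_k]=[\nabla_\ell,\nabla_m]$ for cyclic $(k,\ell,m)$ of $(1,2,3)$; $(\theta^\lambda)$ is the dual basis of $(\nabla_\lambda)$. *)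

theory Defs
  imports Complex_Main
begin

text \<open>The free unital associative C-algebra on generators theta^0..theta^3 is modelled as
  finitely supported functions from words (lists of generator indices < 4) to complex
  coefficients; the word w stands for the monomial theta^(w!0) theta^(w!1) ... .
  The grading puts every generator in degree 1, so degree = word length.\<close>

type_synonym ncpoly = "nat list \<Rightarrow> complex"

definition in_free :: "ncpoly \<Rightarrow> bool" where
  "in_free f \<longleftrightarrow> finite {w. f w \<noteq> 0} \<and> (\<forall>w. f w \<noteq> 0 \<longrightarrow> set w \<subseteq> {..<4})"

definition homog :: "nat \<Rightarrow> ncpoly \<Rightarrow> bool" where
  "homog n f \<longleftrightarrow> in_free f \<and> (\<forall>w. f w \<noteq> 0 \<longrightarrow> length w = n)"

definition mono :: "nat list \<Rightarrow> ncpoly" where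
  "mono w = (\<lambda>v. if v = w then 1 else 0)"

definition lmul :: "nat \<Rightarrow> ncpoly \<Rightarrow> ncpoly" where
  "lmul a f = (\<lambda>w. case w of [] \<Rightarrow> 0 | b # v \<Rightarrow> if b = a then f v else 0)"

definition rmul :: "nat \<Rightarrow> ncpoly \<Rightarrow> ncpoly" where
  "rmul a f = (\<lambda>w. if w \<noteq> [] \<and> last w = a then f (butlast w) else 0)"

definition anticomm_rel :: "nat \<Rightarrow> nat \<Rightarrow> ncpoly" where
  "anticomm_rel \<mu> \<nu> = (\<lambda>w. mono [\<mu>, \<nu>] w + mono [\<nu>, \<mu>] w)"

definition cyc_rel :: "nat \<Rightarrow> nat \<Rightarrow> nat \<Rightarrow> ncpoly" where
  "cyc_rel k l m = (\<lambda>w. mono [0, k] w - mono [k, 0] w + mono [l, m] w - mono [m, l] w)"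

definition rels :: "ncpoly set" where
  "rels = {anticomm_rel \<mu> \<nu> | \<mu> \<nu>. \<mu> < 4 \<and> \<nu> < 4}
        \<union> {cyc_rel 1 2 3, cyc_rel 2 3 1, cyc_rel 3 1 2}"

inductive_set rel_ideal :: "ncpoly set" where
  gen: "r \<in> rels \<Longrightarrow> r \<in> rel_ideal"
| zero: "(\<lambda>_. 0) \<in> rel_ideal"
| add: "f \<in> rel_ideal \<Longrightarrow> g \<in> rel_ideal \<Longrightarrow> (\<lambda>w. f w + g w) \<in> rel_ideal"
| smult: "f \<in> rel_ideal \<Longrightarrow> (\<lambda>w. c * f w) \<in> rel_ideal"
| lmul: "f \<in> rel_ideal \<Longrightarrow> a < 4 \<Longrightarrow> lmul a f \<in> rel_ideal"
| rmul: "f \<in> rel_ideal \<Longrightarrow> a < 4 \<Longrightarrow> rmul a f \<in> rel_ideal"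

text \<open>The images of the monomials in B (words of length n) form a basis of the degree-n
  component A_n = T_n / (I \<inter> T_n) of the quotient algebra: they are linearly independent
  modulo the ideal and span T_n modulo the ideal.\<close>
definition graded_basis :: "nat \<Rightarrow> nat list set \<Rightarrow> bool" where
  "graded_basis n B \<longleftrightarrow>
     (\<forall>b\<in>B. length b = n \<and> set b \<subseteq> {..<4}) \<and>
     (\<forall>c :: nat list \<Rightarrow> complex.
        (\<lambda>w. \<Sum>b\<in>B. c b * mono b w) \<in> rel_ideal \<longrightarrow> (\<forall>b\<in>B. c b = 0)) \<and>
     (\<forall>f. homog n f \<longrightarrow>
        (\<exists>c :: nat list \<Rightarrow> complex. (\<lambda>w. f w - (\<Sum>b\<in>B. c b * mono b w)) \<in> rel_ideal))"

end

theory Submission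
  imports Defs
begin

(* Modulo the relations every quadratic monomial is a multiple of some theta^0 theta^k,
  k = 1, 2, 3: squares vanish, theta^k theta^0 = - theta^0 theta^k, and for a cyclic triple
  (k, l, m) the cyclic relation together with anticommutativity gives
  theta^l theta^m = - theta^0 theta^k = - theta^m theta^l. Reducing first the left and then the
  right quadratic factor, a cubic monomial becomes a multiple of theta^0 theta^0 theta^k', which
  vanishes; so the ideal contains everything of degree at least 3.
  Independence: the relations are homogeneous quadratic, so the ideal has no component of degree
  below 2. For a cyclic triple (k, l, m) the functional f |-> f(0k) - f(k0) - f(lm) + f(ml) kills
  every relation, and it kills theta^a f and f theta^a for f in the ideal because these only see
  the (zero) degree-1 part of f; so it vanishes on the ideal, while on the span of theta^0 theta^1,
  theta^0 theta^2, theta^0 theta^3 it reads off the coefficient of theta^0 theta^k. *)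

definition cyclic_triples :: "(nat \<times> nat \<times> nat) set" where
  "cyclic_triples = {(1, 2, 3), (2, 3, 1), (3, 1, 2)}"

lemma rels_cyclic_triples:
  "rels = {anticomm_rel \<mu> \<nu> | \<mu> \<nu>. \<mu> < 4 \<and> \<nu> < 4}
     \<union> {cyc_rel k l m | k l m. (k, l, m) \<in> cyclic_triples}"
  unfolding rels_def cyclic_triples_def by blast

lemma mono_apply_length: "length w \<noteq> length v \<Longrightarrow> mono v w = 0"
  by (auto simp: mono_def)

lemma rels_quadratic: "r \<in> rels \<Longrightarrow> length w \<noteq> 2 \<Longrightarrow> r w = 0"
  unfolding rels_def by (auto simp: anticomm_rel_def cyc_rel_def mono_apply_length)

lemma rel_ideal_cancel:
  assumes "(\<lambda>w. f w - c * g w) \<in> rel_ideal" "g \<in> rel_ideal"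
  shows "f \<in> rel_ideal"
  using rel_ideal.add[OF assms(1) rel_ideal.smult[OF assms(2), of c]] by simp

lemma rel_ideal_sum:
  "finite A \<Longrightarrow> (\<And>x. x \<in> A \<Longrightarrow> g x \<in> rel_ideal) \<Longrightarrow> (\<lambda>w. \<Sum>x\<in>A. g x w) \<in> rel_ideal"
proof (induction A rule: finite_induct)
  case empty
  then show ?case by (simp add: rel_ideal.zero)
next
  case (insert x A)
  then show ?case using rel_ideal.add[of "g x" "\<lambda>w. \<Sum>x\<in>A. g x w"] by simp
qed

lemma lmul_mono: "lmul a (mono v) = mono (a # v)"
  by (auto simp: lmul_def mono_def split: list.split)

lemma rmul_mono: "rmul a (mono v) = mono (v @ [a])"
  unfolding rmul_def mono_def by (rule ext) (metis snoc_eq_iff_butlast)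

lemma lmul_diff: "lmul a (\<lambda>w. f w - c * g w) = (\<lambda>w. lmul a f w - c * lmul a g w)"
  by (auto simp: lmul_def split: list.split)

lemma rmul_diff: "rmul a (\<lambda>w. f w - c * g w) = (\<lambda>w. rmul a f w - c * rmul a g w)"
  by (auto simp: rmul_def)

lemma sum_mono_apply:
  "finite B \<Longrightarrow> (\<Sum>b\<in>B. c b * mono b w) = (if w \<in> B then c w else 0)"
  by (simp add: mono_def if_distrib cong: if_cong)

lemma sum_support_mono:
  "finite {v. f v \<noteq> 0} \<Longrightarrow> (\<lambda>w. \<Sum>v | f v \<noteq> 0. f v * mono v w) = f"
  by (auto simp: sum_mono_apply)

lemma anticomm_rel_in_rel_ideal: "a < 4 \<Longrightarrow> b < 4 \<Longrightarrow> anticomm_rel a b \<in> rel_ideal"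
  by (rule rel_ideal.gen) (auto simp: rels_def)

lemma cyc_rel_in_rel_ideal: "(k, l, m) \<in> cyclic_triples \<Longrightarrow> cyc_rel k l m \<in> rel_ideal"
  by (rule rel_ideal.gen) (auto simp: rels_cyclic_triples)

lemma rel_ideal_mono_square: "a < 4 \<Longrightarrow> mono [a, a] \<in> rel_ideal"
  using rel_ideal.smult[OF anticomm_rel_in_rel_ideal, of a a "1 / 2"]
  by (simp add: anticomm_rel_def mono_def)

lemma rel_ideal_cyclic:
  assumes "(k, l, m) \<in> cyclic_triples"
  shows "(\<lambda>w. mono [l, m] w - (- 1) * mono [0, k] w) \<in> rel_ideal"
    and "(\<lambda>w. mono [m, l] w - 1 * mono [0, k] w) \<in> rel_ideal"
proof -
  have "cyc_rel k l m \<in> rel_ideal" "anticomm_rel k 0 \<in> rel_ideal" "anticomm_rel l m \<in> rel_ideal"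
    using assms cyc_rel_in_rel_ideal
    by (auto intro: anticomm_rel_in_rel_ideal simp: cyclic_triples_def)
  note combination =
    rel_ideal.add[OF rel_ideal.add[OF rel_ideal.smult rel_ideal.smult] rel_ideal.smult, OF this]
  have "(\<lambda>w. mono [l, m] w - (- 1) * mono [0, k] w) =
      (\<lambda>w. 1/2 * cyc_rel k l m w + 1/2 * anticomm_rel k 0 w + 1/2 * anticomm_rel l m w)"
    using assms by (auto simp: cyclic_triples_def mono_def cyc_rel_def anticomm_rel_def)
  then show "(\<lambda>w. mono [l, m] w - (- 1) * mono [0, k] w) \<in> rel_ideal"
    using combination by presburger
  have "(\<lambda>w. mono [m, l] w - 1 * mono [0, k] w) =
      (\<lambda>w. - 1/2 * cyc_rel k l m w + - 1/2 * anticomm_rel k 0 w + 1/2 * anticomm_rel l m w)"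
    using assms by (auto simp: cyclic_triples_def mono_def cyc_rel_def anticomm_rel_def)
  then show "(\<lambda>w. mono [m, l] w - 1 * mono [0, k] w) \<in> rel_ideal"
    using combination by presburger
qed

lemma cyclic_triples_complete:
  assumes "a \<in> {1, 2, 3}" "b \<in> {1, 2, 3}" "a \<noteq> b"
  obtains k where "(k, a, b) \<in> cyclic_triples" | k where "(k, b, a) \<in> cyclic_triples"
  using assms unfolding cyclic_triples_def by auto

lemma cyclic_triples_range: "(k, l, m) \<in> cyclic_triples \<Longrightarrow> k \<in> {1, 2, 3}"
  by (auto simp: cyclic_triples_def)

lemma mono_deg2_reduce:
  assumes "a < 4" "b < 4"
  shows "\<exists>c k. k \<in> {1, 2, 3} \<and> (\<lambda>w. mono [a, b] w - c * mono [0, k] w) \<in> rel_ideal"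
proof -
  consider "a = b" | "a = 0" "b \<in> {1, 2, 3}" | "b = 0" "a \<in> {1, 2, 3}"
    | "a \<in> {1, 2, 3}" "b \<in> {1, 2, 3}" "a \<noteq> b"
    using assms by (auto simp: eval_nat_numeral less_Suc_eq)
  then show ?thesis
  proof cases
    case 1
    then show ?thesis
      using rel_ideal_mono_square[OF assms(1)] by (intro exI[of _ 0] exI[of _ 1]) auto
  next
    case 2
    then show ?thesis
      using rel_ideal.zero by (intro exI[of _ 1] exI[of _ b]) auto
  next
    case 3
    then show ?thesis
      using anticomm_rel_in_rel_ideal[OF assms(1), of 0]
      by (intro exI[of _ "- 1"] exI[of _ a]) (auto simp: anticomm_rel_def)
  next
    case 4
    then show ?thesis
    proof (cases rule: cyclic_triples_complete)
      case (1 k)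
      show ?thesis using cyclic_triples_range[OF 1] rel_ideal_cyclic(1)[OF 1] by blast
    next
      case (2 k)
      show ?thesis using cyclic_triples_range[OF 2] rel_ideal_cyclic(2)[OF 2] by blast
    qed
  qed
qed

lemma mono_deg3_in_rel_ideal:
  assumes "a < 4" "b < 4" "c < 4"
  shows "mono [a, b, c] \<in> rel_ideal"
proof -
  obtain e k where k: "k \<in> {1, 2, 3}"
    and ab: "(\<lambda>w. mono [a, b] w - e * mono [0, k] w) \<in> rel_ideal"
    using mono_deg2_reduce[OF assms(1,2)] by blast
  then have "k < 4" by auto
  obtain e' k' where k': "k' \<in> {1, 2, 3}"
    and kc: "(\<lambda>w. mono [k, c] w - e' * mono [0, k'] w) \<in> rel_ideal"
    using mono_deg2_reduce[OF \<open>k < 4\<close> assms(3)] by blast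
  have "mono [0, 0, k'] \<in> rel_ideal"
    using rel_ideal.rmul[OF rel_ideal_mono_square, of 0 k'] k' by (auto simp: rmul_mono)
  moreover have "(\<lambda>w. mono [0, k, c] w - e' * mono [0, 0, k'] w) \<in> rel_ideal"
    using rel_ideal.lmul[OF kc, of 0] by (simp add: lmul_diff lmul_mono)
  ultimately have "mono [0, k, c] \<in> rel_ideal"
    by (rule rel_ideal_cancel[rotated])
  moreover have "(\<lambda>w. mono [a, b, c] w - e * mono [0, k, c] w) \<in> rel_ideal"
    using rel_ideal.rmul[OF ab assms(3)] by (simp add: rmul_diff rmul_mono)
  ultimately show ?thesis
    by (rule rel_ideal_cancel[rotated])
qed

lemma mono_in_rel_ideal_if_length_ge_3:
  "3 \<le> length w \<Longrightarrow> set w \<subseteq> {..<4} \<Longrightarrow> mono w \<in> rel_ideal"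
proof (induction w)
  case (Cons a w)
  show ?case
  proof (cases "length w = 2")
    case True
    then obtain b c where "w = [b, c]"
      by (auto simp: length_Suc_conv numeral_2_eq_2)
    then show ?thesis using Cons.prems mono_deg3_in_rel_ideal by simp
  next
    case False
    then show ?thesis
      using Cons rel_ideal.lmul[of "mono w" a] by (simp add: lmul_mono)
  qed
qed simp

lemma rel_ideal_low_degree:
  assumes "f \<in> rel_ideal" "length w < 2"
  shows "f w = 0"
  using assms
proof (induction arbitrary: w rule: rel_ideal.induct)
  case (gen r)
  then show ?case by (simp add: rels_quadratic)
next
  case (lmul f a)
  then show ?case by (auto simp: lmul_def split: list.split)
next
  case (rmul f a)
  then show ?case by (simp add: rmul_def)
qed simp_all

definition coord_0k :: "nat \<Rightarrow> nat \<Rightarrow> nat \<Rightarrow> ncpoly \<Rightarrow> complex" where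
  "coord_0k k l m f = f [0, k] - f [k, 0] - f [l, m] + f [m, l]"

lemma anticomm_rel_swap: "anticomm_rel \<mu> \<nu> [x, y] = anticomm_rel \<mu> \<nu> [y, x]"
  unfolding anticomm_rel_def mono_def by (simp add: add.commute conj_commute)

lemma coord_0k_anticomm_rel: "coord_0k k l m (anticomm_rel \<mu> \<nu>) = 0"
  using anticomm_rel_swap[of \<mu> \<nu> 0 k] anticomm_rel_swap[of \<mu> \<nu> l m]
  by (simp add: coord_0k_def)

lemma coord_0k_cyc_rel:
  "(k, l, m) \<in> cyclic_triples \<Longrightarrow> (k', l', m') \<in> cyclic_triples \<Longrightarrow>
    coord_0k k l m (cyc_rel k' l' m') = 0"
  unfolding cyclic_triples_def
  by (elim insertE emptyE) (simp_all add: coord_0k_def cyc_rel_def mono_def)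

lemma coord_0k_rel_ideal:
  assumes "f \<in> rel_ideal" "(k, l, m) \<in> cyclic_triples"
  shows "coord_0k k l m f = 0"
  using assms(1)
proof (induction rule: rel_ideal.induct)
  case (gen r)
  then show ?case
    using assms(2) coord_0k_anticomm_rel coord_0k_cyc_rel by (auto simp: rels_cyclic_triples)
next
  case (add f g)
  then show ?case by (simp add: coord_0k_def algebra_simps)
next
  case (smult f c)
  then have "c * coord_0k k l m f = 0" by simp
  then show ?case by (simp add: coord_0k_def algebra_simps)
next
  case (lmul f a)
  then show ?case by (simp add: coord_0k_def lmul_def rel_ideal_low_degree)
next
  case (rmul f a)
  then show ?case by (simp add: coord_0k_def rmul_def rel_ideal_low_degree)
qed (simp add: coord_0k_def)

definition in_span_mod_ideal :: "nat list set \<Rightarrow> ncpoly \<Rightarrow> bool" where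
  "in_span_mod_ideal B f \<longleftrightarrow> (\<exists>c. (\<lambda>w. f w - (\<Sum>b\<in>B. c b * mono b w)) \<in> rel_ideal)"

lemma in_span_mod_ideal_empty: "in_span_mod_ideal {} f \<longleftrightarrow> f \<in> rel_ideal"
  by (simp add: in_span_mod_ideal_def)

lemma in_span_mod_ideal_reduce:
  assumes "(\<lambda>w. f w - c * mono b w) \<in> rel_ideal" "b \<in> B" "finite B"
  shows "in_span_mod_ideal B f"
proof -
  have "(\<Sum>x\<in>B. (if x = b then c else 0) * mono x w) = c * mono b w" for w
    using assms(2,3) by (simp add: sum.remove)
  then show ?thesis
    using assms(1) unfolding in_span_mod_ideal_def
    by (intro exI[of _ "\<lambda>x. if x = b then c else 0"]) simp
qed

lemma in_span_mod_ideal_mono: "b \<in> B \<Longrightarrow> finite B \<Longrightarrow> in_span_mod_ideal B (mono b)"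
  using in_span_mod_ideal_reduce[of "mono b" 1 b B] rel_ideal.zero by simp

lemma in_span_mod_ideal_sum:
  assumes "finite A" "\<And>x. x \<in> A \<Longrightarrow> in_span_mod_ideal B (g x)"
  shows "in_span_mod_ideal B (\<lambda>w. \<Sum>x\<in>A. a x * g x w)"
proof -
  obtain C where C: "\<And>x. x \<in> A \<Longrightarrow> (\<lambda>w. g x w - (\<Sum>b\<in>B. C x b * mono b w)) \<in> rel_ideal"
    using assms(2) unfolding in_span_mod_ideal_def by metis
  have "(\<lambda>w. \<Sum>x\<in>A. a x * (g x w - (\<Sum>b\<in>B. C x b * mono b w))) \<in> rel_ideal"
    using assms(1) C by (intro rel_ideal_sum rel_ideal.smult)
  moreover have "(\<lambda>w. \<Sum>x\<in>A. a x * (g x w - (\<Sum>b\<in>B. C x b * mono b w))) =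
      (\<lambda>w. (\<Sum>x\<in>A. a x * g x w) - (\<Sum>b\<in>B. (\<Sum>x\<in>A. a x * C x b) * mono b w))"
    by (simp add: algebra_simps sum_subtractf sum_distrib_left sum_distrib_right sum.swap[of _ B])
  ultimately show ?thesis
    unfolding in_span_mod_ideal_def by auto
qed

lemma in_span_mod_ideal_homog:
  assumes "homog n f" "\<And>w. length w = n \<Longrightarrow> set w \<subseteq> {..<4} \<Longrightarrow> in_span_mod_ideal B (mono w)"
  shows "in_span_mod_ideal B f"
proof -
  have "finite {v. f v \<noteq> 0}" "\<And>v. f v \<noteq> 0 \<Longrightarrow> length v = n \<and> set v \<subseteq> {..<4}"
    using assms(1) by (auto simp: homog_def in_free_def)
  then have "in_span_mod_ideal B (\<lambda>w. \<Sum>v | f v \<noteq> 0. f v * mono v w)"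
    using assms(2) by (intro in_span_mod_ideal_sum) auto
  then show ?thesis
    using sum_support_mono[OF \<open>finite {v. f v \<noteq> 0}\<close>] by simp
qed

definition independent_mod_ideal :: "nat list set \<Rightarrow> bool" where
  "independent_mod_ideal B \<longleftrightarrow>
     (\<forall>c. (\<lambda>w. \<Sum>b\<in>B. c b * mono b w) \<in> rel_ideal \<longrightarrow> (\<forall>b\<in>B. c b = 0))"

lemma graded_basisI:
  assumes "\<And>b. b \<in> B \<Longrightarrow> length b = n \<and> set b \<subseteq> {..<4}" "independent_mod_ideal B"
    and "\<And>w. length w = n \<Longrightarrow> set w \<subseteq> {..<4} \<Longrightarrow> in_span_mod_ideal B (mono w)"
  shows "graded_basis n B"
  using assms in_span_mod_ideal_homog
  unfolding graded_basis_def independent_mod_ideal_def in_span_mod_ideal_def by blast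

lemma independent_mod_ideal_low_degree:
  assumes "finite B" "\<And>b. b \<in> B \<Longrightarrow> length b < 2"
  shows "independent_mod_ideal B"
  unfolding independent_mod_ideal_def
proof (intro allI impI ballI)
  fix c b
  assume "(\<lambda>w. \<Sum>b\<in>B. c b * mono b w) \<in> rel_ideal" "b \<in> B"
  then have "(\<Sum>b'\<in>B. c b' * mono b' b) = 0"
    using rel_ideal_low_degree assms(2) by blast
  then show "c b = 0"
    using \<open>b \<in> B\<close> assms(1) by (simp add: sum_mono_apply)
qed

lemma independent_mod_ideal_deg2: "independent_mod_ideal {[0, 1], [0, 2], [0, 3]}"
  unfolding independent_mod_ideal_def
proof (intro allI impI)
  fix c
  assume ideal: "(\<lambda>w. \<Sum>b\<in>{[0, 1], [0, 2], [0, 3]}. c b * mono b w) \<in> rel_ideal"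
  have "c [0, k] = 0" if "(k, l, m) \<in> cyclic_triples" for k l m
  proof -
    have "coord_0k k l m (\<lambda>w. \<Sum>b\<in>{[0, 1], [0, 2], [0, 3]}. c b * mono b w) = c [0, k]"
      using that unfolding cyclic_triples_def
      by (elim insertE emptyE) (simp_all add: coord_0k_def sum_mono_apply)
    then show ?thesis
      using coord_0k_rel_ideal[OF ideal that] by simp
  qed
  then show "\<forall>b\<in>{[0, 1], [0, 2], [0, 3]}. c b = 0"
    unfolding cyclic_triples_def by blast
qed

lemma in_span_mod_ideal_deg2:
  assumes "length w = 2" "set w \<subseteq> {..<4}"
  shows "in_span_mod_ideal {[0, 1], [0, 2], [0, 3]} (mono w)"
proof -
  obtain a b where "w = [a, b]" "a < 4" "b < 4"
    using assms by (auto simp: length_Suc_conv numeral_2_eq_2)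
  then show ?thesis
    using mono_deg2_reduce[of a b] by (auto intro: in_span_mod_ideal_reduce)
qed

theorem proposition2:
  shows "graded_basis 0 {[]} \<and>
         graded_basis 1 {[0], [1], [2], [3]} \<and>
         graded_basis 2 {[0, 1], [0, 2], [0, 3]} \<and>
         (\<forall>n\<ge>3. graded_basis n {})"
proof (intro conjI allI impI)
  show "graded_basis 0 {[]}"
    by (rule graded_basisI) (auto intro: independent_mod_ideal_low_degree in_span_mod_ideal_mono)
  show "graded_basis 1 {[0], [1], [2], [3]}"
    by (rule graded_basisI)
      (auto simp: length_Suc_conv intro: independent_mod_ideal_low_degree in_span_mod_ideal_mono)
  show "graded_basis 2 {[0, 1], [0, 2], [0, 3]}"
    by (intro graded_basisI independent_mod_ideal_deg2 in_span_mod_ideal_deg2) auto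
  show "graded_basis n {}" if "3 \<le> n" for n
    using that by (intro graded_basisI)
      (auto simp: independent_mod_ideal_def in_span_mod_ideal_empty
        intro: mono_in_rel_ideal_if_length_ge_3)
qed

end
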